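(* Fix $\lambda\in(0,\tfrac1{16})$, $\nu=\sqrt{1-16\lambda}$, $t_1=\frac{1-\nu}{4\lambda}$, an integer $l\ge2$, $\ell=(l-1)(l+2)$, $t_i\in(0,t_1)$, and let $G(t)=\tfrac12-\lambda t$, $\beta(t)=1-2tG(t)$, $\gamma(t)=2G(t)$. For $\kappa\in\mathbb{R}$ define $D(t)=\ell+(\kappa-4)\beta'(t)-(\kappa^2-6\kappa+8)\gamma(t)$. If $\kappa\in[0,4]$, then for all $t\in[t_i,t_1]$, $D(t)\ge0$ and $D'(t)\le0$. *)

theory Defs
  imports "HOL-Analysis.Analysis"
begin

definition G_fun :: "real \<Rightarrow> real \<Rightarrow> real" where
  "G_fun lam t = 1/2 - lam * t"

definition beta_fun :: "real \<Rightarrow> real \<Rightarrow> real" where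
  "beta_fun lam t = 1 - 2 * t * G_fun lam t"

definition gamma_fun :: "real \<Rightarrow> real \<Rightarrow> real" where
  "gamma_fun lam t = 2 * G_fun lam t"

definition D_fun :: "real \<Rightarrow> real \<Rightarrow> real \<Rightarrow> real \<Rightarrow> real" where
  "D_fun lam ell \<kappa> t =
     ell + (\<kappa> - 4) * deriv (beta_fun lam) t - (\<kappa>^2 - 6*\<kappa> + 8) * gamma_fun lam t"

end

theory Submission
  imports Defs
begin

text \<open>Since \<open>\<beta>\<close> is quadratic and \<open>\<gamma>\<close> affine, \<open>D\<close> is affine in \<open>t\<close>:
  \<open>D(t) = \<ell> + (4 - \<kappa>)(\<kappa> - 1 - 2\<lambda>\<kappa>t)\<close>, with slope \<open>2\<lambda>\<kappa>(\<kappa> - 4) \<le> 0\<close>.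
  On \<open>[t\<^sub>i, t\<^sub>1]\<close> we have \<open>4\<lambda>t \<le> 4\<lambda>t\<^sub>1 = 1 - \<nu> \<le> 1\<close>, so
  \<open>D(t) \<ge> \<ell> + (4 - \<kappa>)(\<kappa>/2 - 1) \<ge> \<ell> - 4 \<ge> 0\<close> because \<open>\<ell> \<ge> 4\<close> for \<open>l \<ge> 2\<close>.\<close>

lemma beta_fun_eq: "beta_fun lam = (\<lambda>t. 1 - t + 2 * lam * t\<^sup>2)"
  by (auto simp: beta_fun_def G_fun_def fun_eq_iff algebra_simps power2_eq_square)

lemma deriv_beta_fun: "deriv (beta_fun lam) t = 4 * lam * t - 1"
proof -
  have "((\<lambda>t. 1 - t + 2 * lam * t\<^sup>2) has_field_derivative 4 * lam * t - 1) (at t)"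
    by (auto intro!: derivative_eq_intros simp: algebra_simps)
  then show ?thesis
    unfolding beta_fun_eq by (rule DERIV_imp_deriv)
qed

lemma D_fun_eq: "D_fun lam ell k = (\<lambda>t. ell + (4 - k) * (k - 1 - 2 * lam * k * t))"
  by (auto simp: fun_eq_iff D_fun_def deriv_beta_fun gamma_fun_def G_fun_def
      algebra_simps power2_eq_square)

lemma deriv_D_fun: "deriv (D_fun lam ell k) t = 2 * lam * k * (k - 4)"
proof -
  have "((\<lambda>t. ell + (4 - k) * (k - 1 - 2 * lam * k * t)) has_field_derivative
          2 * lam * k * (k - 4)) (at t)"
    by (auto intro!: derivative_eq_intros simp: algebra_simps)
  then show ?thesis
    unfolding D_fun_eq by (rule DERIV_imp_deriv)
qed

lemma deriv_D_fun_nonpos: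
  assumes "0 \<le> lam" "0 \<le> k" "k \<le> 4"
  shows "deriv (D_fun lam ell k) t \<le> 0"
  unfolding deriv_D_fun using assms by (simp add: mult_nonneg_nonpos)

lemma D_fun_nonneg:
  assumes "4 * lam * t \<le> 1" "4 \<le> ell" "0 \<le> k" "k \<le> 4"
  shows "0 \<le> D_fun lam ell k t"
proof -
  have "k * (4 * lam * t) \<le> k"
    using mult_left_mono[OF assms(1) assms(3)] by simp
  then have "k / 2 - 1 \<le> k - 1 - 2 * lam * k * t"
    by (simp add: algebra_simps)
  then have "(4 - k) * (k / 2 - 1) \<le> (4 - k) * (k - 1 - 2 * lam * k * t)"
    using assms(4) by (intro mult_left_mono) auto
  moreover have "-4 \<le> (4 - k) * (k / 2 - 1)"
  proof -
    have "0 \<le> k * (3 - k / 2)"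
      using assms(3,4) by (intro mult_nonneg_nonneg) auto
    then show ?thesis by (simp add: algebra_simps)
  qed
  ultimately show ?thesis
    unfolding D_fun_eq using assms(2) by linarith
qed

lemma ell_ge_4:
  fixes l :: int
  assumes "2 \<le> l"
  shows "4 \<le> (l - 1) * (l + 2)"
proof -
  have "1 * 4 \<le> (l - 1) * (l + 2)"
    using assms by (intro mult_mono) auto
  then show ?thesis by simp
qed

theorem lemma1:
  fixes lam \<nu> t1 ti \<kappa> :: real and l :: int and ell :: real
  assumes "0 < lam" "lam < 1/16"
    and "\<nu> = sqrt (1 - 16*lam)"
    and "t1 = (1 - \<nu>) / (4*lam)"
    and "l \<ge> 2"
    and "ell = of_int ((l - 1) * (l + 2))"
    and "0 < ti" "ti < t1"
    and "0 \<le> \<kappa>" "\<kappa> \<le> 4"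
  shows "\<forall>t\<in>{ti..t1}. D_fun lam ell \<kappa> t \<ge> 0 \<and> deriv (D_fun lam ell \<kappa>) t \<le> 0"
proof
  fix t assume "t \<in> {ti..t1}"
  then have "4 * lam * t \<le> 4 * lam * t1"
    using assms(1) by (intro mult_left_mono) auto
  also have "\<dots> = 1 - \<nu>"
    using assms(1,4) by simp
  also have "\<dots> \<le> 1"
    using assms(2,3) by simp
  finally have "4 * lam * t \<le> 1" .
  moreover have "4 \<le> ell"
    using ell_ge_4[OF assms(5)] assms(6) by linarith
  ultimately show "D_fun lam ell \<kappa> t \<ge> 0 \<and> deriv (D_fun lam ell \<kappa>) t \<le> 0"
    using D_fun_nonneg deriv_D_fun_nonpos assms(1,9,10) by simp
qed

end
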